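(* Consider $\dot y=A(t)y+B(t)(u+\Delta(y,t))$, $y\in\mathbb{R}^{\bar n}$, $u\in\mathbb{R}^{\bar m}$, with continuous, bounded, $T$-periodic $A,B$, and a continuous $T$-periodic $K(t)$ such that the origin of $\dot\chi=A^{cl}(t)\chi$, $A^{cl}=A+BK$, is exponentially stable, with state-transition matrix $\Psi_{A^{cl}}$. Let $(L(t),F,Y)$ be a real $2T$-periodic Floquet--Lyapunov factorization: $\Psi_{A^{cl}}(t,0)=L(t)e^{Ft}$ with $L$ real, nonsingular, $\mathcal{C}^1$, $F,Y$ real commuting matrices, $L(t+2T)=L(t)$, $L(t+T)=L(t)Y$, $Y^2=I_{\bar n}$. Suppose $F$ has a real invariant subspace $\Lambda$ of codimension $\bar m$, $\hat S\in\mathbb{R}^{\bar m\times\bar n}$ is a full-rank left annihilator of $\Lambda$, and $\operatorname{rank}[\hat S L^{-1}(t)B(t)]=\bar m$ for all $t\in[0,2T)$. Then $S(t):=\hat S L^{-1}(t)$ is $T$-periodic if $\hat S=\hat SY$. *)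

theory Defs
  imports "HOL-Analysis.Analysis"
begin

fun mpow :: "real^'n^'n \<Rightarrow> nat \<Rightarrow> real^'n^'n" where
  "mpow A 0 = mat 1"
| "mpow A (Suc k) = A ** mpow A k"

definition mexp :: "real^'n^'n \<Rightarrow> real^'n^'n" where
  "mexp A = (\<Sum>k. (1 / fact k) *\<^sub>R mpow A k)"

definition periodic_fun :: "real \<Rightarrow> (real \<Rightarrow> 'a) \<Rightarrow> bool" where
  "periodic_fun T f \<longleftrightarrow> (\<forall>t. f (t + T) = f t)"

definition state_transition ::
  "(real \<Rightarrow> real^'n^'n) \<Rightarrow> (real \<Rightarrow> real \<Rightarrow> real^'n^'n) \<Rightarrow> bool" where
  "state_transition M Psi \<longleftrightarrow>
     (\<forall>s. Psi s s = mat 1) \<and>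
     (\<forall>s t. ((\<lambda>\<tau>. Psi \<tau> s) has_vector_derivative (M t ** Psi t s)) (at t))"

definition exp_stable_origin :: "(real \<Rightarrow> real^'n^'n) \<Rightarrow> bool" where
  "exp_stable_origin M \<longleftrightarrow>
     (\<exists>k c. k > 0 \<and> c > 0 \<and>
        (\<forall>x t0. (\<forall>t. (x has_vector_derivative (M t *v x t)) (at t)) \<longrightarrow>
           (\<forall>t\<ge>t0. norm (x t) \<le> k * exp (- c * (t - t0)) * norm (x t0))))"

end

theory Submission
  imports Defs
begin

text \<open>Of all the hypotheses only the monodromy relation \<open>L (t + T) = L t ** Y\<close>, the involution
  \<open>Y ** Y = mat 1\<close> and \<open>Shat = Shat ** Y\<close> are needed: since \<open>Y\<close> is its own inverse,
  \<open>Shat ** (L t ** Y)\<inverse> = Shat ** Y ** (L t)\<inverse> = Shat ** (L t)\<inverse>\<close>.\<close>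

lemma matrix_inv_left_right:
  fixes A :: "'a::semiring_1^'n^'m"
  assumes "invertible A"
  shows "A ** matrix_inv A = mat 1 \<and> matrix_inv A ** A = mat 1"
  using assms unfolding invertible_def matrix_inv_def by (rule someI_ex)

lemma matrix_inv_unique:
  fixes A :: "'a::semiring_1^'n^'m"
  assumes "A ** B = mat 1" and "B ** A = mat 1"
  shows "matrix_inv A = B"
proof -
  have inv: "invertible A"
    using assms unfolding invertible_def by blast
  have "matrix_inv A = matrix_inv A ** (A ** B)"
    by (simp add: assms(1))
  also have "\<dots> = B"
    using matrix_inv_left_right[OF inv] by (metis matrix_mul_assoc matrix_mul_lid)
  finally show ?thesis .
qed

lemma matrix_inv_mult_involution:
  fixes A Y :: "'a::semiring_1^'n^'n"
  assumes "invertible A" and "Y ** Y = mat 1"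
  shows "matrix_inv (A ** Y) = Y ** matrix_inv A"
proof (rule matrix_inv_unique)
  note A_inv = matrix_inv_left_right[OF assms(1)]
  show "(A ** Y) ** (Y ** matrix_inv A) = mat 1"
    by (metis A_inv assms(2) matrix_mul_assoc matrix_mul_lid)
  show "(Y ** matrix_inv A) ** (A ** Y) = mat 1"
    by (metis A_inv assms(2) matrix_mul_assoc matrix_mul_lid)
qed

theorem corollary1:
  fixes T :: real
    and A :: "real \<Rightarrow> real^'n^'n"
    and B :: "real \<Rightarrow> real^'m^'n"
    and K :: "real \<Rightarrow> real^'n^'m"
    and Psi :: "real \<Rightarrow> real \<Rightarrow> real^'n^'n"
    and L :: "real \<Rightarrow> real^'n^'n"
    and F Y :: "real^'n^'n"
    and \<Lambda> :: "(real^'n) set"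
    and Shat :: "real^'n^'m"
  assumes T_pos: "T > 0"
    and A_cont: "continuous_on UNIV A" and A_bdd: "bounded (range A)" and A_per: "periodic_fun T A"
    and B_cont: "continuous_on UNIV B" and B_bdd: "bounded (range B)" and B_per: "periodic_fun T B"
    and K_cont: "continuous_on UNIV K" and K_per: "periodic_fun T K"
    and stable: "exp_stable_origin (\<lambda>t. A t + B t ** K t)"
    and Psi_stm: "state_transition (\<lambda>t. A t + B t ** K t) Psi"
    and floquet: "\<forall>t. Psi t 0 = L t ** mexp (t *\<^sub>R F)"
    and L_inv: "\<forall>t. invertible (L t)"
    and L_C1: "\<exists>L'. (\<forall>t. (L has_vector_derivative L' t) (at t)) \<and> continuous_on UNIV L'"
    and FY_comm: "F ** Y = Y ** F"
    and L_2T: "\<forall>t. L (t + 2 * T) = L t"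
    and L_T: "\<forall>t. L (t + T) = L t ** Y"
    and Y_sq: "Y ** Y = mat 1"
    and Lam_sub: "subspace \<Lambda>"
    and Lam_inv: "\<forall>v\<in>\<Lambda>. F *v v \<in> \<Lambda>"
    and Lam_codim: "dim \<Lambda> + CARD('m) = CARD('n)"
    and Shat_rank: "rank Shat = CARD('m)"
    and Shat_ann: "\<forall>v\<in>\<Lambda>. Shat *v v = 0"
    and rank_cond: "\<forall>t. 0 \<le> t \<and> t < 2 * T \<longrightarrow> rank (Shat ** matrix_inv (L t) ** B t) = CARD('m)"
    and SY: "Shat = Shat ** Y"
  shows "periodic_fun T (\<lambda>t. Shat ** matrix_inv (L t))"
  unfolding periodic_fun_def
proof
  fix t
  have "Shat ** matrix_inv (L (t + T)) = Shat ** (Y ** matrix_inv (L t))"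
    using L_T L_inv Y_sq by (simp add: matrix_inv_mult_involution)
  also have "\<dots> = Shat ** matrix_inv (L t)"
    by (metis SY matrix_mul_assoc)
  finally show "Shat ** matrix_inv (L (t + T)) = Shat ** matrix_inv (L t)" .
qed

end
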